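(* Suppose that a long theta with apexes $u$ and $v$ is the underlying graph of some oriented graph $G$ derived from a Burling tree $(T,r,\ell,c)$. Then for every hole $H$ of $G$, exactly one of $u$ and $v$ is the pivot of $H$.
   Context: Graphs are finite, without loops or multiple edges; oriented graphs have no pair of opposite arcs. A hole is an induced cycle of length at least $4$. A theta is a graph made of three internally vertex-disjoint paths of length at least $2$, each linking two vertices $u$ and $v$ (the apexes), with no edges other than those of the three paths. A long theta is a theta in which all three paths have length at least $3$. In a rooted tree $T$ with root $r$, each non-root vertex $v$ has a parent $p(v)$; children, leaves, ancestors and descendants are as usual. A branch is a sequence $v_1\dots v_k$ ($k\ge0$) with $v_i$ the parent of $v_{i+1}$; it starts at $v_1$. A Burling tree is a 4-tuple $(T,r,\ell,c)$: $T$ a rooted tree with root $r$; $\ell$ assigns to each non-leaf vertex $v$ one of its children $\ell(v)$ (the last-born of $v$); $c$ assigns to every vertex $v$ that is neither the root nor a last-born the vertex-set of a (possibly empty) branch starting at $\ell(p(v))$, and $c(v)=\emptyset$ if $v$ is the root or a last-born. The oriented graph fully derived from it has vertex-set $V(T)$ and an arc $uv$ iff $v\in c(u)$; an oriented graph is derived from the Burling tree if it is an induced subgraph of the fully derived one. A hole of an oriented graph means a hole of its underlying graph. If $G$ is derived from $T$ and $H$ is a hole of $G$, then (as established in the paper) $H$ with the inherited orientation has exactly two sources, called its antennas, and exactly two sinks; exactly one of these sinks is adjacent to both antennas and is an ancestor in $T$ of all vertices of $H$ other than the antennas: it is the pivot of $H$. *)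

theory Defs
  imports Main
begin

text \<open>A rooted tree on the finite vertex set V with root r and parent function p:
 every non-root vertex has its parent in V, and iterating the parent map from any
 vertex reaches the root. (The value p r is irrelevant.)\<close>
definition rooted_tree :: "'a set \<Rightarrow> 'a \<Rightarrow> ('a \<Rightarrow> 'a) \<Rightarrow> bool" where
  "rooted_tree V r p \<longleftrightarrow> finite V \<and> r \<in> V \<and> (\<forall>v\<in>V. v \<noteq> r \<longrightarrow> p v \<in> V)
     \<and> (\<forall>v\<in>V. \<exists>k. (p ^^ k) v = r)"

definition ancestor :: "'a \<Rightarrow> ('a \<Rightarrow> 'a) \<Rightarrow> 'a \<Rightarrow> 'a \<Rightarrow> bool" where
  "ancestor r p x y \<longleftrightarrow> (\<exists>k. x = (p ^^ k) y \<and> (\<forall>i<k. (p ^^ i) y \<noteq> r))"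

definition is_leaf :: "'a set \<Rightarrow> 'a \<Rightarrow> ('a \<Rightarrow> 'a) \<Rightarrow> 'a \<Rightarrow> bool" where
  "is_leaf V r p v \<longleftrightarrow> \<not> (\<exists>w\<in>V. w \<noteq> r \<and> p w = v)"

definition is_branch :: "'a set \<Rightarrow> 'a \<Rightarrow> ('a \<Rightarrow> 'a) \<Rightarrow> 'a list \<Rightarrow> bool" where
  "is_branch V r p xs \<longleftrightarrow> set xs \<subseteq> V \<and>
     (\<forall>i. Suc i < length xs \<longrightarrow> xs ! Suc i \<noteq> r \<and> p (xs ! Suc i) = xs ! i)"

definition is_last_born :: "'a \<Rightarrow> ('a \<Rightarrow> 'a) \<Rightarrow> ('a \<Rightarrow> 'a) \<Rightarrow> 'a \<Rightarrow> bool" where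
  "is_last_born r p l v \<longleftrightarrow> v \<noteq> r \<and> l (p v) = v"

definition burling_tree ::
  "'a set \<Rightarrow> 'a \<Rightarrow> ('a \<Rightarrow> 'a) \<Rightarrow> ('a \<Rightarrow> 'a) \<Rightarrow> ('a \<Rightarrow> 'a set) \<Rightarrow> bool" where
  "burling_tree V r p l c \<longleftrightarrow> rooted_tree V r p
     \<and> (\<forall>v\<in>V. \<not> is_leaf V r p v \<longrightarrow> l v \<in> V \<and> l v \<noteq> r \<and> p (l v) = v)
     \<and> (\<forall>v\<in>V. (v = r \<or> is_last_born r p l v) \<longrightarrow> c v = {})
     \<and> (\<forall>v\<in>V. v \<noteq> r \<and> \<not> is_last_born r p l v \<longrightarrow>
          (\<exists>xs. is_branch V r p xs \<and> (xs = [] \<or> hd xs = l (p v)) \<and> c v = set xs))"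

definition darc :: "('a \<Rightarrow> 'a set) \<Rightarrow> 'a set \<Rightarrow> 'a \<Rightarrow> 'a \<Rightarrow> bool" where
  "darc c S x y \<longleftrightarrow> x \<in> S \<and> y \<in> S \<and> y \<in> c x"

definition uadj :: "('a \<Rightarrow> 'a set) \<Rightarrow> 'a set \<Rightarrow> 'a \<Rightarrow> 'a \<Rightarrow> bool" where
  "uadj c S x y \<longleftrightarrow> darc c S x y \<or> darc c S y x"

definition consec :: "'a list \<Rightarrow> 'a \<Rightarrow> 'a \<Rightarrow> bool" where
  "consec P x y \<longleftrightarrow> (\<exists>i. Suc i < length P \<and> {P ! i, P ! Suc i} = {x, y})"

definition is_path_between :: "('a \<Rightarrow> 'a \<Rightarrow> bool) \<Rightarrow> 'a list \<Rightarrow> 'a \<Rightarrow> 'a \<Rightarrow> bool" where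
  "is_path_between A P u v \<longleftrightarrow> P \<noteq> [] \<and> distinct P \<and> hd P = u \<and> last P = v
     \<and> (\<forall>i. Suc i < length P \<longrightarrow> A (P ! i) (P ! Suc i))"

text \<open>The graph (S, A) is a long theta with apexes u, v: it consists of three internally
 vertex-disjoint u-v paths, each of length (number of edges) at least 3, and has no
 edges other than those of the three paths.\<close>
definition long_theta :: "'a set \<Rightarrow> ('a \<Rightarrow> 'a \<Rightarrow> bool) \<Rightarrow> 'a \<Rightarrow> 'a \<Rightarrow> bool" where
  "long_theta S A u v \<longleftrightarrow> (\<exists>P1 P2 P3.
     is_path_between A P1 u v \<and> is_path_between A P2 u v \<and> is_path_between A P3 u v
     \<and> length P1 \<ge> 4 \<and> length P2 \<ge> 4 \<and> length P3 \<ge> 4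
     \<and> set P1 \<inter> set P2 = {u, v} \<and> set P1 \<inter> set P3 = {u, v} \<and> set P2 \<inter> set P3 = {u, v}
     \<and> S = set P1 \<union> set P2 \<union> set P3
     \<and> (\<forall>x\<in>S. \<forall>y\<in>S. A x y \<longleftrightarrow> (consec P1 x y \<or> consec P2 x y \<or> consec P3 x y)))"

definition is_hole :: "'a set \<Rightarrow> ('a \<Rightarrow> 'a \<Rightarrow> bool) \<Rightarrow> 'a set \<Rightarrow> bool" where
  "is_hole S A H \<longleftrightarrow> (\<exists>cs. distinct cs \<and> length cs \<ge> 4 \<and> set cs = H \<and> H \<subseteq> S
     \<and> (\<forall>i<length cs. \<forall>j<length cs. A (cs ! i) (cs ! j) \<longleftrightarrow>
          (j = Suc i mod length cs \<or> i = Suc j mod length cs)))"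

definition hole_source :: "('a \<Rightarrow> 'a set) \<Rightarrow> 'a set \<Rightarrow> 'a set \<Rightarrow> 'a \<Rightarrow> bool" where
  "hole_source c S H x \<longleftrightarrow> x \<in> H \<and> (\<forall>y\<in>H. uadj c S x y \<longrightarrow> darc c S x y)"

definition hole_sink :: "('a \<Rightarrow> 'a set) \<Rightarrow> 'a set \<Rightarrow> 'a set \<Rightarrow> 'a \<Rightarrow> bool" where
  "hole_sink c S H x \<longleftrightarrow> x \<in> H \<and> (\<forall>y\<in>H. uadj c S x y \<longrightarrow> darc c S y x)"

definition is_pivot ::
  "'a \<Rightarrow> ('a \<Rightarrow> 'a) \<Rightarrow> ('a \<Rightarrow> 'a set) \<Rightarrow> 'a set \<Rightarrow> 'a set \<Rightarrow> 'a \<Rightarrow> bool" where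
  "is_pivot r p c S H x \<longleftrightarrow> hole_sink c S H x
     \<and> (\<forall>a. hole_source c S H a \<longrightarrow> uadj c S x a)
     \<and> (\<forall>w\<in>H. \<not> hole_source c S H w \<longrightarrow> ancestor r p x w)"

end

(* Arcs of a graph derived from a Burling tree go from a vertex x to a branch starting at the
   last-born sibling of x.  Hence adjacent vertices are incomparable in the tree, and arcs never
   decrease depth.  So every hole has a source a; the neighbour x of a that is an ancestor of the
   other one is a sink, its second neighbour is the only other source, and x is an ancestor of
   all remaining vertices: x is the pivot.

   In a long theta with paths Q 0, Q 1, Q 2 from u to v, suppose the pivot s of a hole is not an
   apex.  As u and v have no common neighbour, some source a next to s is an inner vertex, lying
   with s on one path Q i.  In each hole formed by Q i and another path, a is again a source with
   the same neighbours, so s is again the pivot and both sources lie on Q i.  Then every source of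
   the hole formed by the two other paths is an apex, and its pivot would be adjacent to both u
   and v.  Hence the pivot, which is unique, is u or v. *)

theory Submission
  imports Defs
begin

section \<open>Rooted trees\<close>

lemma ancestor_of_root: "ancestor r p x r \<Longrightarrow> x = r"
  unfolding ancestor_def by (metis funpow_0 neq0_conv)

locale rtree =
  fixes V :: "'a set" and r :: 'a and p :: "'a \<Rightarrow> 'a"
  assumes rooted_tree: "rooted_tree V r p"
begin

abbreviation anc :: "'a \<Rightarrow> 'a \<Rightarrow> bool" where
  "anc x y \<equiv> ancestor r p x y"

lemma finite_V: "finite V"
  and parent_in_V: "\<And>v. v \<in> V \<Longrightarrow> v \<noteq> r \<Longrightarrow> p v \<in> V"
  and reaches_root: "\<And>v. v \<in> V \<Longrightarrow> \<exists>k. (p ^^ k) v = r"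
  using rooted_tree unfolding rooted_tree_def by blast+

lemma funpow_parent_in_V: "y \<in> V \<Longrightarrow> \<forall>i<k. (p ^^ i) y \<noteq> r \<Longrightarrow> (p ^^ k) y \<in> V"
  by (induction k) (auto intro: parent_in_V)

lemma ancestor_in_V: "anc x y \<Longrightarrow> y \<in> V \<Longrightarrow> x \<in> V"
  unfolding ancestor_def using funpow_parent_in_V by blast

lemma ancestor_refl [simp]: "anc x x"
  unfolding ancestor_def by (rule exI[of _ 0]) simp

lemma ancestor_trans [trans]:
  assumes "anc x y" "anc y z"
  shows "anc x z"
proof -
  obtain k where k: "x = (p ^^ k) y" "\<forall>i<k. (p ^^ i) y \<noteq> r"
    using assms(1) unfolding ancestor_def by blast
  obtain m where m: "y = (p ^^ m) z" "\<forall>i<m. (p ^^ i) z \<noteq> r"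
    using assms(2) unfolding ancestor_def by blast
  have "(p ^^ i) z \<noteq> r" if "i < k + m" for i
  proof (cases "i < m")
    case False
    then have "(p ^^ i) z = (p ^^ (i - m)) y"
      using m(1) by (metis funpow_add le_add_diff_inverse2 not_less o_apply)
    then show ?thesis using k(2) False that by auto
  qed (use m(2) in blast)
  moreover have "x = (p ^^ (k + m)) z" using k m by (simp add: funpow_add)
  ultimately show ?thesis unfolding ancestor_def by blast
qed

lemma ancestor_iff_parent:
  assumes "y \<noteq> r"
  shows "anc x y \<longleftrightarrow> x = y \<or> anc x (p y)"
proof
  assume "anc x y"
  then obtain k where k: "x = (p ^^ k) y" "\<forall>i<k. (p ^^ i) y \<noteq> r"
    unfolding ancestor_def by blast
  show "x = y \<or> anc x (p y)"
  proof (cases k)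
    case (Suc k')
    then have "x = (p ^^ k') (p y) \<and> (\<forall>i<k'. (p ^^ i) (p y) \<noteq> r)"
      using k by (auto simp: funpow_Suc_right simp del: funpow.simps)
    then show ?thesis unfolding ancestor_def by blast
  qed (use k in simp)
next
  assume "x = y \<or> anc x (p y)"
  then show "anc x y"
  proof
    assume "anc x (p y)"
    then obtain k where k: "x = (p ^^ k) (p y)" "\<forall>i<k. (p ^^ i) (p y) \<noteq> r"
      unfolding ancestor_def by blast
    have "\<forall>i<Suc k. (p ^^ i) y \<noteq> r"
      using k(2) assms by (auto simp: less_Suc_eq_0_disj funpow_Suc_right simp del: funpow.simps)
    moreover have "x = (p ^^ Suc k) y"
      using k(1) by (simp add: funpow_Suc_right del: funpow.simps)
    ultimately show ?thesis unfolding ancestor_def by blast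
  qed simp
qed

lemma ancestor_parent: "y \<noteq> r \<Longrightarrow> anc (p y) y"
  using ancestor_iff_parent by auto

lemma ancestor_antisym:
  assumes "y \<in> V" "anc x y" "anc y x"
  shows "x = y"
proof (rule ccontr)
  assume "x \<noteq> y"
  obtain k where k: "x = (p ^^ k) y" "\<forall>i<k. (p ^^ i) y \<noteq> r"
    using assms(2) unfolding ancestor_def by blast
  obtain m where m: "y = (p ^^ m) x" "\<forall>i<m. (p ^^ i) x \<noteq> r"
    using assms(3) unfolding ancestor_def by blast
  define n where "n = k + m"
  have "n > 0" using k \<open>x \<noteq> y\<close> unfolding n_def by (cases k) auto
  have period: "(p ^^ n) y = y"
    using k(1) m(1) unfolding n_def by (metis add.commute funpow_add o_apply)
  have avoids_root: "(p ^^ i) y \<noteq> r" if "i < n" for i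
  proof (cases "i < k")
    case False
    then have "(p ^^ i) y = (p ^^ (i - k)) x"
      using k(1) by (metis funpow_add le_add_diff_inverse2 not_less o_apply)
    then show ?thesis using m(2) False that unfolding n_def by auto
  qed (use k(2) in blast)
  obtain K where K: "(p ^^ K) y = r" using reaches_root assms(1) by blast
  have multiples: "(p ^^ (q * n)) y = y" for q
    by (induction q) (simp_all add: funpow_add period)
  have "(p ^^ (K mod n + K div n * n)) y = (p ^^ (K mod n)) y"
    by (simp only: funpow_add o_apply multiples)
  then have "(p ^^ (K mod n)) y = r" using K by simp
  then show False using avoids_root[of "K mod n"] \<open>n > 0\<close> by simp
qed

lemma ancestors_linear:
  assumes "anc a y" "anc b y"
  shows "anc a b \<or> anc b a"
proof -
  have above: "anc a b"
    if "a = (p ^^ i) y" "\<forall>t<i. (p ^^ t) y \<noteq> r" "b = (p ^^ j) y" "j \<le> i" for a b i j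
  proof -
    have shift: "(p ^^ t) b = (p ^^ (t + j)) y" for t
      using that(3) by (simp add: funpow_add)
    then have "a = (p ^^ (i - j)) b" using that by simp
    moreover have "\<forall>t<i - j. (p ^^ t) b \<noteq> r"
      using that(2) shift by (simp add: less_diff_conv)
    ultimately show ?thesis unfolding ancestor_def by blast
  qed
  obtain i where "a = (p ^^ i) y" "\<forall>t<i. (p ^^ t) y \<noteq> r"
    using assms(1) unfolding ancestor_def by blast
  moreover obtain j where "b = (p ^^ j) y" "\<forall>t<j. (p ^^ t) y \<noteq> r"
    using assms(2) unfolding ancestor_def by blast
  ultimately show ?thesis using above[of a i b j] above[of b j a i] nat_le_linear by blast
qed

lemma parent_neq:
  assumes "y \<in> V" "y \<noteq> r"
  shows "p y \<noteq> y"
proof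
  assume "p y = y"
  then have "(p ^^ k) y = y" for k by (induction k) auto
  then show False using reaches_root assms by metis
qed

lemma sibling_not_ancestor:
  assumes "y \<in> V" "z \<in> V" "y \<noteq> r" "z \<noteq> r" "p y = p z" "y \<noteq> z"
  shows "\<not> anc y z"
proof
  assume "anc y z"
  then have "anc y (p y)" using ancestor_iff_parent assms by metis
  then show False
    using ancestor_antisym[of y "p y"] ancestor_parent parent_neq parent_in_V assms by metis
qed

definition depth :: "'a \<Rightarrow> nat" where
  "depth y = card {x. anc x y}"

lemma finite_ancestors: "y \<in> V \<Longrightarrow> finite {x. anc x y}"
  by (rule finite_subset[OF _ finite_V]) (use ancestor_in_V in blast)

lemma depth_less:
  assumes "y \<in> V" "anc x y" "x \<noteq> y"
  shows "depth x < depth y"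
proof -
  have "{w. anc w x} \<subseteq> {w. anc w y}" using assms(2) ancestor_trans by blast
  moreover have "y \<notin> {w. anc w x}" using ancestor_antisym assms by blast
  ultimately have "{w. anc w x} \<subset> {w. anc w y}" by auto
  then show ?thesis
    unfolding depth_def using finite_ancestors[OF assms(1)] psubset_card_mono by blast
qed

lemma depth_parent:
  assumes "y \<in> V" "y \<noteq> r"
  shows "depth y = Suc (depth (p y))"
proof -
  have "{x. anc x y} = insert y {x. anc x (p y)}"
    using ancestor_iff_parent[OF assms(2)] by auto
  moreover have "\<not> anc y (p y)"
    using ancestor_antisym[OF assms(1) ancestor_parent] parent_neq assms by blast
  moreover have "finite {x. anc x (p y)}"
    using finite_ancestors parent_in_V assms by blast
  ultimately show ?thesis unfolding depth_def by simp
qed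

lemma branch_ancestor:
  assumes "is_branch V r p xs" "j < length xs" "i \<le> j"
  shows "anc (xs ! i) (xs ! j)"
  using assms(2,3)
proof (induction j)
  case (Suc j)
  have "xs ! Suc j \<noteq> r" "p (xs ! Suc j) = xs ! j"
    using assms(1) Suc.prems unfolding is_branch_def by blast+
  then show ?case
    using Suc ancestor_iff_parent by (metis le_Suc_eq Suc_lessD)
qed simp

lemma branch_convex:
  assumes "is_branch V r p xs" "j < length xs" "anc (xs ! 0) w" "anc w (xs ! j)"
  shows "w \<in> set xs"
  using assms(2,4)
proof (induction j)
  case 0
  have "xs ! 0 \<in> V" using assms(1) 0 unfolding is_branch_def by (meson nth_mem subsetD)
  then show ?case using ancestor_antisym assms(3) 0 by (metis nth_mem)
next
  case (Suc j)
  have "xs ! Suc j \<noteq> r" "p (xs ! Suc j) = xs ! j"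
    using assms(1) Suc.prems unfolding is_branch_def by blast+
  then show ?case
    using Suc ancestor_iff_parent by (metis Suc_lessD nth_mem)
qed

end

section \<open>Arcs of a Burling tree\<close>

locale burling =
  fixes V :: "'a set" and r :: 'a and p l :: "'a \<Rightarrow> 'a" and c :: "'a \<Rightarrow> 'a set"
  assumes burling_tree: "burling_tree V r p l c"

sublocale burling \<subseteq> rtree V r p
  using burling_tree unfolding burling_tree_def by unfold_locales blast

context burling
begin

lemma last_born_sibling:
  assumes "x \<in> V" "x \<noteq> r"
  shows "l (p x) \<in> V" "l (p x) \<noteq> r" "p (l (p x)) = p x"
proof -
  have "\<not> is_leaf V r p (p x)" unfolding is_leaf_def using assms by blast
  then show "l (p x) \<in> V" "l (p x) \<noteq> r" "p (l (p x)) = p x"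
    using burling_tree parent_in_V assms unfolding burling_tree_def by blast+
qed

lemma arcs_of_last_born:
  assumes "x \<in> V" "x \<noteq> r"
  shows "c (l (p x)) = {}"
  using burling_tree last_born_sibling[OF assms]
  unfolding burling_tree_def is_last_born_def by simp

lemma arcs_form_branch:
  assumes "x \<in> V" "y \<in> c x"
  obtains xs where "x \<noteq> r" "l (p x) \<noteq> x" "is_branch V r p xs" "xs \<noteq> []"
    "xs ! 0 = l (p x)" "c x = set xs"
proof -
  have "x \<noteq> r \<and> \<not> is_last_born r p l x"
    using burling_tree assms unfolding burling_tree_def by blast
  moreover obtain xs where "is_branch V r p xs" "xs = [] \<or> hd xs = l (p x)" "c x = set xs"
    using burling_tree assms calculation unfolding burling_tree_def by blast
  moreover have "xs \<noteq> []" using assms(2) \<open>c x = set xs\<close> by auto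
  ultimately show ?thesis
    using that unfolding is_last_born_def by (metis hd_conv_nth)
qed

lemma arc_endpoints:
  assumes "x \<in> V" "y \<in> c x"
  shows "x \<noteq> r" "l (p x) \<noteq> x" "anc (l (p x)) y" "y \<in> V"
proof -
  obtain xs where xs: "x \<noteq> r" "l (p x) \<noteq> x" "is_branch V r p xs" "xs ! 0 = l (p x)"
    "c x = set xs"
    using arcs_form_branch[OF assms] by metis
  obtain j where "j < length xs" "xs ! j = y" using xs(5) assms(2) by (auto simp: in_set_conv_nth)
  then have "anc (xs ! 0) y" using branch_ancestor[OF xs(3)] by blast
  then show "x \<noteq> r" "l (p x) \<noteq> x" "anc (l (p x)) y" using xs by simp_all
  show "y \<in> V" using xs(3,5) assms(2) unfolding is_branch_def by blast
qed

lemma arc_targets_linear: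
  assumes "x \<in> V" "y \<in> c x" "z \<in> c x"
  shows "anc y z \<or> anc z y"
proof -
  obtain xs where xs: "is_branch V r p xs" "c x = set xs"
    using arcs_form_branch[OF assms(1,2)] by metis
  obtain i j where "i < length xs" "xs ! i = y" "j < length xs" "xs ! j = z"
    using xs(2) assms(2,3) by (auto simp: in_set_conv_nth)
  then show ?thesis using branch_ancestor[OF xs(1)] by (metis nat_le_linear)
qed

lemma arc_targets_convex:
  assumes "x \<in> V" "y \<in> c x" "anc (l (p x)) w" "anc w y"
  shows "w \<in> c x"
proof -
  obtain xs where xs: "is_branch V r p xs" "xs ! 0 = l (p x)" "c x = set xs"
    using arcs_form_branch[OF assms(1,2)] by metis
  obtain j where "j < length xs" "xs ! j = y" using xs(3) assms(2) by (auto simp: in_set_conv_nth)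
  then show ?thesis using branch_convex[OF xs(1), of j w] xs(2,3) assms(3,4) by simp
qed

lemma arc_incomparable:
  assumes "x \<in> V" "y \<in> c x"
  shows "\<not> anc x y" "\<not> anc y x"
proof -
  have y: "x \<noteq> r" "l (p x) \<noteq> x" "anc (l (p x)) y" using arc_endpoints assms by blast+
  note sib = last_born_sibling[OF assms(1) y(1)]
  have not_below: "\<not> anc x (l (p x))" "\<not> anc (l (p x)) x"
    using sibling_not_ancestor[of x "l (p x)"] sibling_not_ancestor[of "l (p x)" x] sib assms(1) y
    by auto
  show "\<not> anc x y"
  proof
    assume "anc x y"
    then have "anc x (l (p x)) \<or> anc (l (p x)) x" using ancestors_linear[OF _ y(3)] by blast
    then show False using not_below by blast
  qed
  show "\<not> anc y x" using ancestor_trans[OF y(3)] not_below(2) by blast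
qed

lemma arc_asym:
  assumes "x \<in> V" "y \<in> c x"
  shows "x \<notin> c y"
proof
  assume "x \<in> c y"
  have y: "x \<noteq> r" "anc (l (p x)) y" "y \<in> V" using arc_endpoints assms by blast+
  have x: "y \<noteq> r" "l (p y) \<noteq> y" "anc (l (p y)) x" using arc_endpoints[OF y(3) \<open>x \<in> c y\<close>] by blast+
  note sib = last_born_sibling[OF assms(1) y(1)]
  have "l (p x) \<noteq> y" using x(2) sib(3) by metis
  then have "anc (l (p x)) (p y)" using y(2) ancestor_iff_parent x(1) by blast
  also have "anc (p y) (l (p y))" using last_born_sibling[OF y(3) x(1)] ancestor_parent by metis
  also note x(3)
  finally show False
    using sibling_not_ancestor[of "l (p x)" x] sib assms(1) y(1) arc_endpoints(2)[OF assms] by metis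
qed

lemma arc_depth:
  assumes "x \<in> V" "y \<in> c x"
  shows "depth x \<le> depth y" "depth x = depth y \<Longrightarrow> y = l (p x)"
proof -
  have y: "x \<noteq> r" "anc (l (p x)) y" "y \<in> V" using arc_endpoints assms by blast+
  have sib: "depth (l (p x)) = depth x"
    using depth_parent last_born_sibling[OF assms(1) y(1)] assms(1) y(1) by metis
  then have "y = l (p x) \<or> depth x < depth y" using depth_less[OF y(3) y(2)] by auto
  then show "depth x \<le> depth y" "depth x = depth y \<Longrightarrow> y = l (p x)" using sib by auto
qed

lemma arc_leaving_subtree:
  assumes "anc x e" "\<not> anc x f" "e \<in> V" "f \<in> c e"
  shows "e = x"
proof (rule ccontr)
  assume "e \<noteq> x"
  have "e \<noteq> r" using \<open>e \<noteq> x\<close> assms(1) ancestor_of_root by metis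
  then have "anc x (p e)" using ancestor_iff_parent assms(1) \<open>e \<noteq> x\<close> by metis
  also have "anc (p e) (l (p e))"
    using last_born_sibling[OF assms(3) \<open>e \<noteq> r\<close>] ancestor_parent by metis
  also have "anc (l (p e)) f" using arc_endpoints assms(3,4) by blast
  finally show False using assms(2) by blast
qed

lemma arc_entering_subtree:
  assumes "anc x e" "\<not> anc x f" "f \<in> V" "e \<in> c f"
  shows "x \<in> c f"
proof -
  have f: "f \<noteq> r" "anc (l (p f)) e" using arc_endpoints assms(3,4) by blast+
  have "\<not> anc x (p f)" using assms(2) ancestor_parent[OF f(1)] ancestor_trans by blast
  then have "\<not> anc x (l (p f)) \<or> x = l (p f)"
    using ancestor_iff_parent last_born_sibling[OF assms(3) f(1)] by metis
  then have "anc (l (p f)) x" using ancestors_linear[OF f(2) assms(1)] by auto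
  then show ?thesis using arc_targets_convex[OF assms(3,4) _ assms(1)] by blast
qed

end

section \<open>Cycles as vertex sets\<close>

definition nbrs :: "('a \<Rightarrow> 'a \<Rightarrow> bool) \<Rightarrow> 'a set \<Rightarrow> 'a \<Rightarrow> 'a set" where
  "nbrs A H x = {y \<in> H. A x y}"

definition cut_edges :: "('a \<Rightarrow> 'a \<Rightarrow> bool) \<Rightarrow> 'a set \<Rightarrow> 'a set \<Rightarrow> ('a \<times> 'a) set" where
  "cut_edges A H X = {(x, y). x \<in> H \<inter> X \<and> y \<in> H - X \<and> A x y}"

text \<open>The subgraph induced on H is 2-regular and 2-edge-connected, so for finite H it is a
  cycle. Holes are cycles in this sense, and so is the union of two paths of a theta; working
  with vertex sets spares us from listing such cycles in cyclic order.\<close>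
definition is_cycle :: "('a \<Rightarrow> 'a \<Rightarrow> bool) \<Rightarrow> 'a set \<Rightarrow> bool" where
  "is_cycle A H \<longleftrightarrow> (\<forall>x\<in>H. card (nbrs A H x) = 2) \<and>
     (\<forall>X. H \<inter> X \<noteq> {} \<longrightarrow> H - X \<noteq> {} \<longrightarrow> (\<exists>e\<in>cut_edges A H X. \<exists>f\<in>cut_edges A H X. e \<noteq> f))"

lemma is_cycle_nbrs:
  assumes "is_cycle A H" "x \<in> H"
  obtains y z where "y \<noteq> z" "nbrs A H x = {y, z}"
proof -
  have "card (nbrs A H x) = 2" using assms unfolding is_cycle_def by blast
  then show ?thesis using that unfolding card_2_iff by blast
qed

lemma card_2_other:
  assumes "card X = 2" "y \<in> X"
  obtains z where "z \<noteq> y" "X = {y, z}"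
proof -
  obtain a b where ab: "a \<noteq> b" "X = {a, b}" using assms(1) unfolding card_2_iff by blast
  show ?thesis
  proof (cases "y = a")
    case True
    then show ?thesis using that[of b] ab by simp
  next
    case False
    then have "y = b" using ab assms(2) by blast
    then show ?thesis using that[of a] ab by (simp add: insert_commute)
  qed
qed

lemma is_cycle_other_nbr:
  assumes "is_cycle A H" "x \<in> H" "y \<in> nbrs A H x"
  obtains z where "z \<noteq> y" "nbrs A H x = {y, z}"
  using card_2_other assms unfolding is_cycle_def by metis

lemma is_cycle_nbrs_eq:
  assumes "is_cycle A H" "x \<in> H" "H \<subseteq> S" "card (nbrs A S x) = 2"
  shows "nbrs A H x = nbrs A S x"
proof (rule card_subset_eq)
  show "finite (nbrs A S x)" using assms(4) card_ge_0_finite by force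
  show "nbrs A H x \<subseteq> nbrs A S x" using assms(3) unfolding nbrs_def by blast
  show "card (nbrs A H x) = card (nbrs A S x)" using assms unfolding is_cycle_def by simp
qed

lemma nbrs_restrict: "H \<subseteq> S \<Longrightarrow> nbrs A H x = nbrs A S x \<inter> H"
  unfolding nbrs_def by blast

lemma is_cycle_cut:
  assumes "is_cycle A H" "x \<in> H" "x \<in> X" "y \<in> H" "y \<notin> X"
  obtains e f where "e \<in> cut_edges A H X" "f \<in> cut_edges A H X" "e \<noteq> f"
proof -
  have "H \<inter> X \<noteq> {}" "H - X \<noteq> {}" using assms(2-5) by blast+
  then have "\<exists>e\<in>cut_edges A H X. \<exists>f\<in>cut_edges A H X. e \<noteq> f"
    using assms(1) unfolding is_cycle_def by blast
  then show ?thesis using that by blast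
qed

lemma mod_Suc_eq_iff_pred:
  assumes "i < n" "j < n"
  shows "i = Suc j mod n \<longleftrightarrow> j = (i + n - 1) mod n"
proof (cases i)
  case (Suc k)
  then have "(i + n - 1) mod n = k" using assms by simp
  then show ?thesis using assms Suc by (auto simp: mod_Suc)
qed (use assms in \<open>auto simp: mod_Suc\<close>)

lemma Suc_mod_neq_pred:
  assumes "i < n" "3 \<le> n"
  shows "Suc i mod n \<noteq> (i + n - 1) mod n"
proof (cases i)
  case (Suc k)
  then have "(i + n - 1) mod n = k" using assms by simp
  then show ?thesis using assms Suc by (auto simp: mod_Suc)
qed (use assms in \<open>auto simp: mod_Suc\<close>)

lemma exists_mod_Suc_change:
  assumes "i0 < n" "i1 < n" "P i0" "\<not> P i1"
  shows "\<exists>i<n. P i \<and> \<not> P (Suc i mod n)"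
proof (rule ccontr)
  assume "\<not> ?thesis"
  then have "P ((i0 + k) mod n)" for k
    using assms(1,3) by (induction k) (auto simp: mod_Suc_eq)
  moreover have "(i0 + (i1 + n - i0)) mod n = i1" using assms(1,2) by simp
  ultimately show False using assms(4) by metis
qed

lemma exists_Suc_change:
  assumes "a \<le> b" "P a" "\<not> P b"
  shows "\<exists>m. a \<le> m \<and> m < b \<and> P m \<and> \<not> P (Suc m)"
  using assms
proof (induction b)
  case (Suc b)
  show ?case
  proof (cases "P b")
    case True
    then show ?thesis using Suc.prems by (metis le_SucE lessI)
  next
    case False
    then have "a \<le> b" using Suc.prems by (metis le_SucE)
    then show ?thesis using Suc.IH Suc.prems(2) False by (metis less_Suc_eq)
  qed
qed simp

lemma cut_edges_Compl:
  assumes "\<And>x y. x \<in> H \<Longrightarrow> y \<in> H \<Longrightarrow> A x y \<Longrightarrow> A y x"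
  shows "prod.swap ` cut_edges A H (- X) = cut_edges A H X"
  using assms unfolding cut_edges_def by force

context
  fixes A :: "'a \<Rightarrow> 'a \<Rightarrow> bool" and cs :: "'a list"
  assumes cs_distinct: "distinct cs" and cs_length: "3 \<le> length cs"
    and cs_adjacent: "\<And>i j. i < length cs \<Longrightarrow> j < length cs \<Longrightarrow>
      A (cs ! i) (cs ! j) \<longleftrightarrow> j = Suc i mod length cs \<or> i = Suc j mod length cs"
begin

lemma cyclic_list_degree:
  assumes "i < length cs"
  shows "card (nbrs A (set cs) (cs ! i)) = 2"
proof -
  let ?n = "length cs"
  have "A (cs ! i) (cs ! j) \<longleftrightarrow> j = Suc i mod ?n \<or> j = (i + ?n - 1) mod ?n" if "j < ?n" for j
    using cs_adjacent[OF assms that] mod_Suc_eq_iff_pred[OF assms that] by blast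
  moreover have "0 < ?n" using cs_length by linarith
  then have bounds: "Suc i mod ?n < ?n" "(i + ?n - 1) mod ?n < ?n" by (rule mod_less_divisor)+
  ultimately have "nbrs A (set cs) (cs ! i) = {cs ! (Suc i mod ?n), cs ! ((i + ?n - 1) mod ?n)}"
    unfolding nbrs_def set_conv_nth by auto
  moreover have "cs ! (Suc i mod ?n) \<noteq> cs ! ((i + ?n - 1) mod ?n)"
    using Suc_mod_neq_pred[OF assms cs_length] nth_eq_iff_index_eq[OF cs_distinct bounds] by simp
  ultimately show ?thesis by simp
qed

lemma cyclic_list_cut:
  assumes "set cs \<inter> X \<noteq> {}" "set cs - X \<noteq> {}"
  shows "\<exists>e\<in>cut_edges A (set cs) X. \<exists>f\<in>cut_edges A (set cs) X. e \<noteq> f"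
proof -
  let ?n = "length cs"
  obtain i0 i1 where i01: "i0 < ?n" "cs ! i0 \<in> X" "i1 < ?n" "cs ! i1 \<notin> X"
    using assms unfolding set_conv_nth by blast
  obtain i where i: "i < ?n" "cs ! i \<in> X" "cs ! (Suc i mod ?n) \<notin> X"
    using exists_mod_Suc_change[of i0 ?n i1 "\<lambda>k. cs ! k \<in> X"] i01 by blast
  obtain j where j: "j < ?n" "cs ! j \<notin> X" "cs ! (Suc j mod ?n) \<in> X"
    using exists_mod_Suc_change[of i1 ?n i0 "\<lambda>k. cs ! k \<notin> X"] i01 by blast
  have "0 < ?n" using cs_length by linarith
  then have "Suc i mod ?n < ?n" "Suc j mod ?n < ?n" by (rule mod_less_divisor)+
  then have "(cs ! i, cs ! (Suc i mod ?n)) \<in> cut_edges A (set cs) X"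
    "(cs ! (Suc j mod ?n), cs ! j) \<in> cut_edges A (set cs) X"
    using i j cs_adjacent unfolding cut_edges_def by auto
  moreover have "(cs ! i, cs ! (Suc i mod ?n)) \<noteq> (cs ! (Suc j mod ?n), cs ! j)"
  proof
    assume "(cs ! i, cs ! (Suc i mod ?n)) = (cs ! (Suc j mod ?n), cs ! j)"
    then have "i = Suc j mod ?n" "Suc i mod ?n = j"
      using nth_eq_iff_index_eq[OF cs_distinct] i(1) j(1) \<open>Suc i mod ?n < ?n\<close>
        \<open>Suc j mod ?n < ?n\<close> by auto
    then have "Suc (Suc j mod ?n) mod ?n = j" by simp
    then show False using j(1) cs_length by (auto simp: mod_Suc split: if_splits)
  qed
  ultimately show ?thesis by blast
qed

lemma cyclic_list_is_cycle: "is_cycle A (set cs)"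
  using cyclic_list_degree cyclic_list_cut unfolding is_cycle_def by (metis in_set_conv_nth)

end

lemma hole_is_cycle:
  assumes "is_hole S A H"
  shows "is_cycle A H"
proof -
  obtain cs where "distinct cs" "4 \<le> length cs" "set cs = H"
     "\<forall>i<length cs. \<forall>j<length cs. A (cs ! i) (cs ! j) \<longleftrightarrow>
          (j = Suc i mod length cs \<or> i = Suc j mod length cs)"
    using assms unfolding is_hole_def by blast
  then show ?thesis using cyclic_list_is_cycle[of cs A] by simp
qed

section \<open>Paths as lists\<close>

lemma consec_sym: "consec P x y \<longleftrightarrow> consec P y x"
  unfolding consec_def by (simp add: insert_commute)

lemma consec_in_set:
  assumes "consec P x y"
  shows "x \<in> set P" "y \<in> set P"
proof -
  obtain i where "Suc i < length P" "{P ! i, P ! Suc i} = {x, y}"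
    using assms unfolding consec_def by blast
  moreover have "P ! i \<in> set P" "P ! Suc i \<in> set P" using calculation(1) by simp_all
  ultimately show "x \<in> set P" "y \<in> set P" by (auto simp: doubleton_eq_iff)
qed

lemma consec_irrefl: "distinct P \<Longrightarrow> \<not> consec P x x"
  unfolding consec_def by (auto simp: nth_eq_iff_index_eq)

lemma consec_nth:
  assumes "distinct P" "t < length P"
  shows "consec P (P ! t) y \<longleftrightarrow> (0 < t \<and> y = P ! (t - 1)) \<or> (Suc t < length P \<and> y = P ! Suc t)"
proof
  assume "consec P (P ! t) y"
  then obtain i where i: "Suc i < length P" "{P ! i, P ! Suc i} = {P ! t, y}"
    unfolding consec_def by blast
  then have "P ! t = P ! i \<and> y = P ! Suc i \<or> P ! t = P ! Suc i \<and> y = P ! i"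
    by (auto simp: doubleton_eq_iff)
  then have "t = i \<and> y = P ! Suc i \<or> t = Suc i \<and> y = P ! i"
    using assms i(1) nth_eq_iff_index_eq by (metis Suc_lessD)
  then show "(0 < t \<and> y = P ! (t - 1)) \<or> (Suc t < length P \<and> y = P ! Suc t)"
    using i(1) by auto
next
  assume "(0 < t \<and> y = P ! (t - 1)) \<or> (Suc t < length P \<and> y = P ! Suc t)"
  then show "consec P (P ! t) y"
  proof
    assume "0 < t \<and> y = P ! (t - 1)"
    then have "Suc (t - 1) < length P" "{P ! (t - 1), P ! Suc (t - 1)} = {P ! t, y}"
      using assms(2) by auto
    then show ?thesis unfolding consec_def by blast
  next
    assume "Suc t < length P \<and> y = P ! Suc t"
    then show ?thesis unfolding consec_def by blast
  qed
qed

lemma consec_rev: "consec (rev P) x y \<longleftrightarrow> consec P x y"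
proof -
  have "consec P x y" if rev_consec: "consec (rev P) x y" for P :: "'a list"
  proof -
    obtain i where i: "Suc i < length P" "{rev P ! i, rev P ! Suc i} = {x, y}"
      using rev_consec unfolding consec_def by auto
    define j where "j = length P - Suc (Suc i)"
    have "Suc j < length P" "rev P ! i = P ! Suc j" "rev P ! Suc i = P ! j"
      using i(1) unfolding j_def by (auto simp: rev_nth Suc_diff_Suc)
    then show ?thesis using i(2) unfolding consec_def by (metis insert_commute)
  qed
  from this[of P] this[of "rev P"] show ?thesis by auto
qed

section \<open>Sources and pivots of holes in derived graphs\<close>

locale derived_graph = burling +
  fixes S :: "'a set"
  assumes S_subset: "S \<subseteq> V"
begin

abbreviation adj :: "'a \<Rightarrow> 'a \<Rightarrow> bool" where
  "adj \<equiv> uadj c S"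

lemma adj_sym: "adj x y \<longleftrightarrow> adj y x"
  unfolding uadj_def by blast

lemma adj_in_S: "adj x y \<Longrightarrow> x \<in> S \<and> y \<in> S"
  unfolding uadj_def darc_def by blast

lemma darc_asym: "darc c S x y \<Longrightarrow> \<not> darc c S y x"
  unfolding darc_def using arc_asym S_subset by blast

lemma adj_incomparable:
  assumes "adj x y"
  shows "\<not> anc x y" "\<not> anc y x"
  using assms arc_incomparable S_subset unfolding uadj_def darc_def by blast+

lemma darc_leaving_subtree:
  "darc c S e f \<Longrightarrow> anc x e \<Longrightarrow> \<not> anc x f \<Longrightarrow> e = x"
  using arc_leaving_subtree S_subset unfolding darc_def by blast

lemma darc_entering_subtree:
  "darc c S f e \<Longrightarrow> x \<in> S \<Longrightarrow> anc x e \<Longrightarrow> \<not> anc x f \<Longrightarrow> darc c S f x"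
  using arc_entering_subtree S_subset unfolding darc_def by blast

lemma source_nbr_darc: "hole_source c S H a \<Longrightarrow> y \<in> nbrs adj H a \<Longrightarrow> darc c S a y"
  unfolding hole_source_def nbrs_def by blast

lemma sink_nbr_darc: "hole_sink c S H x \<Longrightarrow> y \<in> nbrs adj H x \<Longrightarrow> darc c S y x"
  unfolding hole_sink_def nbrs_def by blast

lemma source_not_sink:
  assumes "is_cycle adj H" "hole_source c S H x"
  shows "\<not> hole_sink c S H x"
proof
  assume "hole_sink c S H x"
  obtain y z where "nbrs adj H x = {y, z}"
    using is_cycle_nbrs assms unfolding hole_source_def by metis
  then show False
    using source_nbr_darc[OF assms(2)] sink_nbr_darc[OF \<open>hole_sink c S H x\<close>] darc_asym
    by blast
qed

lemma is_cycle_subset: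
  assumes "is_cycle adj H"
  shows "H \<subseteq> S"
proof
  fix x assume "x \<in> H"
  then obtain y z where "nbrs adj H x = {y, z}" using is_cycle_nbrs assms by metis
  then show "x \<in> S" using adj_in_S unfolding nbrs_def by blast
qed

text \<open>Otherwise a vertex m of minimum depth has an in-arc from some z of the same depth, so m
  is the last-born sibling of z; likewise z is a last-born, but last-borns have no out-arcs.\<close>
lemma source_exists:
  assumes "is_cycle adj H" "H \<noteq> {}"
  shows "\<exists>a. hole_source c S H a"
proof (rule ccontr)
  assume no_source: "\<nexists>a. hole_source c S H a"
  have HV: "H \<subseteq> V" using is_cycle_subset assms(1) S_subset by blast
  have in_arc: "\<exists>z\<in>H. x \<in> c z" if xH: "x \<in> H" for x
  proof -
    obtain y where "y \<in> H" "adj x y" "\<not> darc c S x y"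
      using no_source xH unfolding hole_source_def by blast
    then show ?thesis unfolding uadj_def darc_def by blast
  qed
  have "finite H" using HV finite_V finite_subset by blast
  obtain m where m: "m \<in> H" "\<forall>z\<in>H. depth m \<le> depth z"
    using arg_min_if_finite[OF \<open>finite H\<close> assms(2), of depth] by (metis not_less)
  obtain z where z: "z \<in> H" "m \<in> c z" using in_arc m(1) by blast
  have "depth z = depth m" using arc_depth(1)[of z m] z m HV by fastforce
  obtain z2 where z2: "z2 \<in> H" "z \<in> c z2" using in_arc z(1) by blast
  have "depth z2 = depth z" using arc_depth(1)[of z2 z] z2 m \<open>depth z = depth m\<close> HV by fastforce
  then have "z = l (p z2)" using arc_depth(2) z2 HV by blast
  then have "c z = {}" using arcs_of_last_born arc_endpoints(1) z2 HV by blast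
  then show False using z(2) by blast
qed

lemma source_nbrs_linear:
  assumes "is_cycle adj H" "hole_source c S H a"
  obtains x y where "nbrs adj H a = {x, y}" "x \<noteq> y" "anc x y"
proof -
  have "a \<in> H" using assms(2) unfolding hole_source_def by blast
  then obtain x y where xy: "x \<noteq> y" "nbrs adj H a = {x, y}"
    using is_cycle_nbrs assms(1) by metis
  then have "x \<in> c a" "y \<in> c a" "a \<in> V"
    using source_nbr_darc[OF assms(2)] S_subset unfolding darc_def by blast+
  then have "anc x y \<or> anc y x" using arc_targets_linear by blast
  then show ?thesis using that xy by (metis insert_commute)
qed

text \<open>x will turn out to be the pivot of H, and x' its second source.\<close>
context
  fixes H a x y x'
  assumes cycle: "is_cycle adj H" and source: "hole_source c S H a"
    and nbrs_a: "nbrs adj H a = {x, y}" and "x \<noteq> y" and "anc x y"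
    and nbrs_x: "nbrs adj H x = {a, x'}" and "x' \<noteq> a"
begin

lemma lower_nbr_facts: "x \<in> H" "x' \<in> H" "\<not> anc x a" "\<not> anc x x'" "darc c S a x"
  using nbrs_a nbrs_x source_nbr_darc[OF source] adj_incomparable adj_sym
  unfolding nbrs_def by blast+

lemma edge_leaving_lower_subtree:
  assumes "e \<in> H" "f \<in> H" "adj e f" "anc x e" "\<not> anc x f"
  shows "f \<in> {a, x'}" "e \<noteq> x \<Longrightarrow> darc c S f x"
proof -
  have "x \<in> S" using lower_nbr_facts(1) is_cycle_subset[OF cycle] by blast
  have "e = x \<or> darc c S f x"
    using assms(3-5) darc_leaving_subtree darc_entering_subtree[OF _ \<open>x \<in> S\<close>]
    unfolding uadj_def by blast
  then show "e \<noteq> x \<Longrightarrow> darc c S f x" by blast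
  from \<open>e = x \<or> darc c S f x\<close> have "adj x f" using assms(3) unfolding uadj_def by blast
  then have "f \<in> nbrs adj H x" using assms(2) unfolding nbrs_def by blast
  then show "f \<in> {a, x'}" using nbrs_x by blast
qed

text \<open>The cut around the subtree of x plus a is crossed only by edges into x'; as it is
  crossed twice, the other neighbour of x' lies in the subtree of x.\<close>
lemma other_nbr_of_lower_nbr:
  obtains x'' where "nbrs adj H x' = {x, x''}" "x'' \<noteq> x" "x'' \<in> H" "anc x x''"
proof -
  note facts = lower_nbr_facts
  obtain x'' where x'': "x'' \<noteq> x" "nbrs adj H x' = {x, x''}"
    using is_cycle_other_nbr[OF cycle facts(2)] facts(1) nbrs_x adj_sym
    unfolding nbrs_def by blast
  define X where "X = {w \<in> H. anc x w} \<union> {a}"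
  have crossing: "f = x' \<and> e \<in> {x, x''}" if "(e, f) \<in> cut_edges adj H X" for e f
  proof (cases "e = a")
    case True
    then have "f \<in> nbrs adj H a" using that unfolding cut_edges_def nbrs_def by blast
    then have "anc x f" using nbrs_a \<open>anc x y\<close> by auto
    then show ?thesis using that unfolding cut_edges_def X_def by blast
  next
    case False
    then have "f = x'"
      using that edge_leaving_lower_subtree(1) unfolding cut_edges_def X_def by auto
    then show ?thesis using that x'' adj_sym unfolding cut_edges_def nbrs_def by auto
  qed
  have "a \<in> H" using source unfolding hole_source_def by blast
  then obtain e1 e2 where "e1 \<in> cut_edges adj H X" "e2 \<in> cut_edges adj H X" "e1 \<noteq> e2"
    using is_cycle_cut[OF cycle, of a X x'] facts(2,4) \<open>x' \<noteq> a\<close> unfolding X_def by blast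
  then have "x'' \<in> X" using crossing unfolding cut_edges_def by auto
  moreover have "x'' \<noteq> a"
  proof
    assume "x'' = a"
    then have "x' \<in> nbrs adj H a" using x'' adj_sym facts(2) unfolding nbrs_def by blast
    then show False using nbrs_a facts(4) \<open>anc x y\<close> by auto
  qed
  ultimately show ?thesis using that x'' unfolding X_def by blast
qed

lemma lower_nbr_sink_and_source: "hole_sink c S H x" "hole_source c S H x'"
proof -
  note facts = lower_nbr_facts
  obtain x'' where x'': "nbrs adj H x' = {x, x''}" "x'' \<noteq> x" "x'' \<in> H" "anc x x''"
    using other_nbr_of_lower_nbr .
  have "adj x'' x'" using x'' adj_sym unfolding nbrs_def by blast
  then have "darc c S x' x"
    using edge_leaving_lower_subtree(2) x'' facts(2,4) by blast
  moreover have "darc c S x' x''"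
    using \<open>adj x'' x'\<close> darc_leaving_subtree x''(2,4) facts(4) unfolding uadj_def by blast
  ultimately show "hole_sink c S H x" "hole_source c S H x'"
    using facts nbrs_x x'' unfolding hole_sink_def hole_source_def nbrs_def by auto
qed

text \<open>No edge of H leaves the subtree of x plus a and x', so H lies within it.\<close>
lemma cycle_below_lower_nbr: "H \<subseteq> {w. anc x w} \<union> {a, x'}"
proof (rule ccontr)
  define Y where "Y = {w. anc x w} \<union> {a, x'}"
  assume "\<not> H \<subseteq> {w. anc x w} \<union> {a, x'}"
  then obtain w where "w \<in> H" "w \<notin> Y" unfolding Y_def by blast
  moreover have "a \<in> H" "a \<in> Y" using source unfolding hole_source_def Y_def by blast+
  ultimately obtain e f where ef: "(e, f) \<in> cut_edges adj H Y"
    using is_cycle_cut[OF cycle] by (metis surj_pair)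
  obtain x'' where x'': "nbrs adj H x' = {x, x''}" "anc x x''"
    using other_nbr_of_lower_nbr by blast
  have "f \<notin> Y" "e \<in> H" "f \<in> H" "adj e f" using ef unfolding cut_edges_def by blast+
  show False
  proof (cases "e = a \<or> e = x'")
    case True
    then have "f \<in> nbrs adj H a \<or> f \<in> nbrs adj H x'"
      using \<open>f \<in> H\<close> \<open>adj e f\<close> unfolding nbrs_def by blast
    then have "anc x f" using nbrs_a x'' \<open>anc x y\<close> by auto
    then show False using \<open>f \<notin> Y\<close> unfolding Y_def by blast
  next
    case False
    then have "anc x e" using ef unfolding cut_edges_def Y_def by blast
    then show False
      using edge_leaving_lower_subtree(1) \<open>e \<in> H\<close> \<open>f \<in> H\<close> \<open>adj e f\<close> \<open>f \<notin> Y\<close>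
      unfolding Y_def by blast
  qed
qed

end

lemma source_lower_nbr:
  assumes "is_cycle adj H" "hole_source c S H a" "nbrs adj H a = {x, y}" "x \<noteq> y" "anc x y"
  obtains x' where "nbrs adj H x = {a, x'}" "x' \<noteq> a" "hole_sink c S H x"
    "hole_source c S H x'" "H \<subseteq> {w. anc x w} \<union> {a, x'}"
proof -
  have "x \<in> H" "a \<in> nbrs adj H x"
    using assms(2,3) adj_sym unfolding nbrs_def hole_source_def by blast+
  then obtain x' where "x' \<noteq> a" "nbrs adj H x = {a, x'}"
    using is_cycle_other_nbr[OF assms(1)] by metis
  then show ?thesis
    using that lower_nbr_sink_and_source cycle_below_lower_nbr assms by blast
qed

text \<open>A third source would have its own such neighbour, which would be both an ancestor and a
  descendant of x.\<close>
lemma pivot_at_lower_nbr: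
  assumes "is_cycle adj H" "hole_source c S H a" "nbrs adj H a = {x, y}" "x \<noteq> y" "anc x y"
  shows "is_pivot r p c S H x" "{w. hole_source c S H w} = nbrs adj H x"
proof -
  obtain x' where x': "nbrs adj H x = {a, x'}" "x' \<noteq> a" "hole_sink c S H x"
    "hole_source c S H x'" "H \<subseteq> {w. anc x w} \<union> {a, x'}"
    by (rule source_lower_nbr[OF assms])
  have "x \<in> H" "x \<in> V"
    using assms(3) is_cycle_subset[OF assms(1)] S_subset unfolding nbrs_def by blast+
  have "b \<in> {a, x'}" if b: "hole_source c S H b" for b
  proof (rule ccontr)
    assume "b \<notin> {a, x'}"
    obtain xb yb where b_nbrs: "nbrs adj H b = {xb, yb}" "xb \<noteq> yb" "anc xb yb"
      using source_nbrs_linear[OF assms(1) b] .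
    obtain xb' where xb': "nbrs adj H xb = {b, xb'}" "hole_sink c S H xb"
      "hole_source c S H xb'" "H \<subseteq> {w. anc xb w} \<union> {b, xb'}"
      using source_lower_nbr[OF assms(1) b b_nbrs] .
    have "xb \<in> H" using xb'(2) unfolding hole_sink_def by blast
    have "anc xb x"
      using xb'(4) \<open>x \<in> H\<close> source_not_sink[OF assms(1)] b xb'(3) x'(3) by blast
    moreover have "anc x xb"
      using x'(5) \<open>xb \<in> H\<close> source_not_sink[OF assms(1)] assms(2) x'(4) xb'(2) by blast
    ultimately have "xb = x" using ancestor_antisym \<open>x \<in> V\<close> by blast
    then show False using xb'(1) x'(1) \<open>b \<notin> {a, x'}\<close> by blast
  qed
  moreover have "hole_source c S H a" "hole_source c S H x'" by fact+
  ultimately show sources: "{w. hole_source c S H w} = nbrs adj H x" unfolding x'(1) by blast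
  show "is_pivot r p c S H x"
    unfolding is_pivot_def
  proof (intro conjI allI impI ballI)
    show "hole_sink c S H x" by fact
    show "adj x b" if "hole_source c S H b" for b
      using that sources unfolding nbrs_def by blast
    show "anc x w" if "w \<in> H" "\<not> hole_source c S H w" for w
      using that x'(5) sources x'(1) by blast
  qed
qed

lemma pivot_exists:
  assumes "is_cycle adj H" "H \<noteq> {}"
  obtains s where "is_pivot r p c S H s" "{w. hole_source c S H w} = nbrs adj H s"
proof -
  obtain a where "hole_source c S H a" using source_exists[OF assms] by blast
  then show ?thesis
    using that pivot_at_lower_nbr source_nbrs_linear[OF assms(1)] assms(1) by metis
qed

lemma pivot_unique:
  assumes "is_cycle adj H" "is_pivot r p c S H s" "is_pivot r p c S H t"
  shows "s = t"
proof -
  have "s \<in> H" "t \<in> H" "s \<in> V"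
    using assms is_cycle_subset[OF assms(1)] S_subset unfolding is_pivot_def hole_sink_def
    by blast+
  moreover have "\<not> hole_source c S H s" "\<not> hole_source c S H t"
    using assms source_not_sink unfolding is_pivot_def by blast+
  ultimately have "anc s t" "anc t s" using assms(2,3) unfolding is_pivot_def by blast+
  then show ?thesis using ancestor_antisym \<open>s \<in> V\<close> by blast
qed

lemma pivot_sources:
  assumes "is_cycle adj H" "is_pivot r p c S H s"
  shows "{w. hole_source c S H w} = nbrs adj H s"
proof -
  have "H \<noteq> {}" using assms(2) unfolding is_pivot_def hole_sink_def by blast
  then show ?thesis using pivot_exists[OF assms(1)] pivot_unique[OF assms] by metis
qed

text \<open>Arcs from a source go to comparable vertices, so b cannot be the second neighbour of s,
  the only other source.\<close>
lemma pivot_above_source_nbr: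
  assumes cycle: "is_cycle adj H" and pivot: "is_pivot r p c S H s"
    and "a \<in> nbrs adj H s" "b \<in> nbrs adj H a" "b \<noteq> s"
  shows "anc s b"
proof -
  have sources: "{w. hole_source c S H w} = nbrs adj H s" by (rule pivot_sources[OF cycle pivot])
  then have "hole_source c S H a" using assms(3) by blast
  have "s \<in> nbrs adj H a" using assms(3) pivot adj_sym
    unfolding nbrs_def is_pivot_def hole_sink_def by blast
  have "\<not> hole_source c S H b"
  proof
    assume "hole_source c S H b"
    then have "adj s b" using sources unfolding nbrs_def by blast
    have "darc c S a b" "darc c S a s"
      using source_nbr_darc[OF \<open>hole_source c S H a\<close>] assms(4) \<open>s \<in> nbrs adj H a\<close> by blast+
    then have "anc s b \<or> anc b s" using arc_targets_linear S_subset unfolding darc_def by blast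
    then show False using adj_incomparable[OF \<open>adj s b\<close>] by blast
  qed
  moreover have "b \<in> H" using assms(4) unfolding nbrs_def by blast
  ultimately show ?thesis using pivot unfolding is_pivot_def by blast
qed

lemma source_restrict:
  assumes "hole_source c S H w" "w \<in> H'" "nbrs adj H' w \<subseteq> H"
  shows "hole_source c S H' w"
  using assms unfolding hole_source_def nbrs_def by blast

end

section \<open>Long thetas\<close>

locale long_theta_paths =
  fixes A :: "'a \<Rightarrow> 'a \<Rightarrow> bool" and S :: "'a set" and Q :: "nat \<Rightarrow> 'a list" and u v :: 'a
  assumes paths: "\<And>i. i < 3 \<Longrightarrow> is_path_between A (Q i) u v"
    and long: "\<And>i. i < 3 \<Longrightarrow> 4 \<le> length (Q i)"
    and disjoint: "\<And>i j. i < 3 \<Longrightarrow> j < 3 \<Longrightarrow> i \<noteq> j \<Longrightarrow> set (Q i) \<inter> set (Q j) = {u, v}"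
    and vertices: "S = set (Q 0) \<union> set (Q 1) \<union> set (Q 2)"
    and edges: "\<And>x y. x \<in> S \<Longrightarrow> y \<in> S \<Longrightarrow> A x y \<longleftrightarrow> (\<exists>i<3. consec (Q i) x y)"

lemma long_theta_paths_exist:
  assumes "long_theta S A u v"
  obtains Q where "long_theta_paths A S Q u v"
proof -
  obtain P0 P1 P2 where P:
    "is_path_between A P0 u v" "is_path_between A P1 u v" "is_path_between A P2 u v"
    "length P0 \<ge> 4" "length P1 \<ge> 4" "length P2 \<ge> 4"
    "set P0 \<inter> set P1 = {u, v}" "set P0 \<inter> set P2 = {u, v}" "set P1 \<inter> set P2 = {u, v}"
    "S = set P0 \<union> set P1 \<union> set P2"
    "\<forall>x\<in>S. \<forall>y\<in>S. A x y \<longleftrightarrow> (consec P0 x y \<or> consec P1 x y \<or> consec P2 x y)"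
    using assms unfolding long_theta_def by blast
  define Q where "Q i = (if i = 0 then P0 else if i = 1 then P1 else P2)" for i :: nat
  have cases3: "i < 3 \<longleftrightarrow> i = 0 \<or> i = 1 \<or> i = 2" for i :: nat by auto
  have "long_theta_paths A S Q u v"
    using P unfolding long_theta_paths_def cases3 Q_def by (auto simp: Int_commute)
  then show ?thesis using that by blast
qed

context long_theta_paths
begin

lemma path_facts:
  assumes "i < 3"
  shows "distinct (Q i)" "Q i ! 0 = u" "Q i ! (length (Q i) - 1) = v" "set (Q i) \<subseteq> S"
    "\<And>m. Suc m < length (Q i) \<Longrightarrow> A (Q i ! m) (Q i ! Suc m)"
proof -
  have P: "Q i \<noteq> []" "distinct (Q i)" "hd (Q i) = u" "last (Q i) = v"
     "\<forall>m. Suc m < length (Q i) \<longrightarrow> A (Q i ! m) (Q i ! Suc m)"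
    using paths[OF assms] unfolding is_path_between_def by blast+
  then show "distinct (Q i)" "Q i ! 0 = u" "Q i ! (length (Q i) - 1) = v"
    by (simp_all add: hd_conv_nth last_conv_nth)
  have "i = 0 \<or> i = 1 \<or> i = 2" using assms by linarith
  then show "set (Q i) \<subseteq> S" using vertices by auto
  show "\<And>m. Suc m < length (Q i) \<Longrightarrow> A (Q i ! m) (Q i ! Suc m)" using P by blast
qed

lemma apexes_on_path: "i < 3 \<Longrightarrow> u \<in> set (Q i) \<and> v \<in> set (Q i)"
  using path_facts(2,3) long nth_mem[of 0 "Q i"] nth_mem[of "length (Q i) - 1" "Q i"] by force

lemma apexes_in_S: "u \<in> S" "v \<in> S"
  using apexes_on_path[of 0] path_facts(4)[of 0] by auto

lemma vertex_on_path:
  assumes "x \<in> S"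
  obtains i where "i < 3" "x \<in> set (Q i)"
proof -
  have "x \<in> set (Q 0) \<or> x \<in> set (Q 1) \<or> x \<in> set (Q 2)" using assms vertices by blast
  then show ?thesis using that[of 0] that[of 1] that[of 2] by fastforce
qed

lemma A_sym: "x \<in> S \<Longrightarrow> y \<in> S \<Longrightarrow> A x y \<longleftrightarrow> A y x"
  by (simp add: edges consec_sym)

lemma A_irrefl: "x \<in> S \<Longrightarrow> \<not> A x x"
  by (simp add: edges consec_irrefl path_facts(1))

lemma index_of_u:
  assumes "i < 3" "t < length (Q i)" "Q i ! t = u"
  shows "t = 0"
proof -
  have "0 < length (Q i)" using long[OF assms(1)] by (cases "Q i") auto
  then show ?thesis
    using nth_eq_iff_index_eq[OF path_facts(1)[OF assms(1)] assms(2), of 0] assms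
      path_facts(2)[OF assms(1)] by simp
qed

lemma index_of_v:
  assumes "i < 3" "t < length (Q i)" "Q i ! t = v"
  shows "t = length (Q i) - 1"
  using nth_eq_iff_index_eq[OF path_facts(1)[OF assms(1)] assms(2), of "length (Q i) - 1"] assms
    path_facts(3)[OF assms(1)] long[OF assms(1)] by simp

lemma apexes_distinct: "u \<noteq> v"
proof
  assume "u = v"
  then have "Q 0 ! (length (Q 0) - 1) = u" using path_facts(3)[of 0] by simp
  moreover have "length (Q 0) - 1 < length (Q 0)" using long[of 0] by simp
  ultimately have "length (Q 0) - 1 = 0" using index_of_u[of 0 "length (Q 0) - 1"] by simp
  then show False using long[of 0] by simp
qed

lemma on_other_path:
  "i < 3 \<Longrightarrow> j < 3 \<Longrightarrow> i \<noteq> j \<Longrightarrow> x \<in> set (Q i) \<Longrightarrow> x \<in> set (Q j) \<Longrightarrow> x \<in> {u, v}"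
  using disjoint by blast

lemma inner_vertex:
  assumes "x \<in> S" "x \<notin> {u, v}"
  obtains i t where "i < 3" "x = Q i ! t" "0 < t" "Suc t < length (Q i)"
    "\<forall>j<3. j \<noteq> i \<longrightarrow> x \<notin> set (Q j)" "nbrs A S x = {Q i ! (t - 1), Q i ! Suc t}"
    "Q i ! (t - 1) \<noteq> Q i ! Suc t"
proof -
  obtain i where i: "i < 3" "x \<in> set (Q i)" using vertex_on_path[OF assms(1)] .
  then obtain t where t: "t < length (Q i)" "x = Q i ! t" by (metis in_set_conv_nth)
  have "x \<noteq> u" "x \<noteq> v" using assms(2) by auto
  then have "t \<noteq> 0" "t \<noteq> length (Q i) - 1" using t path_facts(2,3)[OF i(1)] by metis+
  then have t_inner: "0 < t" "Suc t < length (Q i)" using t(1) by linarith+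
  have other: "\<forall>j<3. j \<noteq> i \<longrightarrow> x \<notin> set (Q j)" using on_other_path i assms(2) by blast
  have nbr_iff: "A x y \<longleftrightarrow> consec (Q i) x y" if yS: "y \<in> S" for y
  proof
    assume "A x y"
    then obtain k where k: "k < 3" "consec (Q k) x y" using edges[OF assms(1) yS] by blast
    then have "k = i" using other consec_in_set(1)[OF k(2)] by auto
    then show "consec (Q i) x y" using k(2) by simp
  qed (use edges[OF assms(1) yS] i(1) in blast)
  have "nbrs A S x = {y. consec (Q i) x y}"
  proof (intro equalityI subsetI)
    fix y assume "y \<in> {y. consec (Q i) x y}"
    then have "consec (Q i) x y" by simp
    moreover from this have "y \<in> S"
      using consec_in_set(2) subsetD[OF path_facts(4)[OF i(1)]] by metis
    ultimately show "y \<in> nbrs A S x" using nbr_iff unfolding nbrs_def by auto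
  qed (use nbr_iff in \<open>auto simp: nbrs_def\<close>)
  also have "\<dots> = {Q i ! (t - 1), Q i ! Suc t}"
    using consec_nth[OF path_facts(1)[OF i(1)] t(1)] t_inner t(2) by auto
  finally have "nbrs A S x = {Q i ! (t - 1), Q i ! Suc t}" .
  moreover have "Q i ! (t - 1) \<noteq> Q i ! Suc t"
    using path_facts(1)[OF i(1)] t_inner by (simp add: nth_eq_iff_index_eq)
  ultimately show ?thesis using that i(1) t(2) t_inner other by blast
qed

lemma inner_vertex_path:
  assumes "x \<in> S" "x \<notin> {u, v}"
  obtains i where "i < 3" "x \<in> set (Q i)" "\<forall>j<3. j \<noteq> i \<longrightarrow> x \<notin> set (Q j)"
    "nbrs A S x \<subseteq> set (Q i)" "card (nbrs A S x) = 2"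
proof -
  obtain i t where "i < 3" "x = Q i ! t" "0 < t" "Suc t < length (Q i)"
    "\<forall>j<3. j \<noteq> i \<longrightarrow> x \<notin> set (Q j)" "nbrs A S x = {Q i ! (t - 1), Q i ! Suc t}"
    "Q i ! (t - 1) \<noteq> Q i ! Suc t"
    by (rule inner_vertex[OF assms])
  then show ?thesis using that[of i] by auto
qed

lemma first_apex_nbrs: "nbrs A S u = (\<lambda>i. Q i ! 1) ` {..<3}"
proof -
  have "consec (Q i) u y \<longleftrightarrow> y = Q i ! 1" if "i < 3" for i y
  proof -
    have "0 < length (Q i)" "Suc 0 < length (Q i)" using long[OF that] by auto
    then show ?thesis
      using consec_nth[OF path_facts(1)[OF that], of 0] path_facts(2)[OF that] by auto
  qed
  then have "y \<in> S \<Longrightarrow> A u y \<longleftrightarrow> (\<exists>i<3. y = Q i ! 1)" for y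
    using edges[OF apexes_in_S(1)] by blast
  moreover have "Q i ! 1 \<in> S" if "i < 3" for i
    using path_facts(4)[OF that] long[OF that] by (simp add: subset_iff)
  ultimately show ?thesis unfolding nbrs_def by auto
qed

lemma no_common_nbr:
  assumes "x \<in> S" "A x u" "A x v"
  shows False
proof (cases "x \<in> {u, v}")
  case True
  then show False using assms A_irrefl by auto
next
  case False
  obtain i t where it: "i < 3" "x = Q i ! t" "0 < t" "Suc t < length (Q i)"
    "\<forall>j<3. j \<noteq> i \<longrightarrow> x \<notin> set (Q j)" "nbrs A S x = {Q i ! (t - 1), Q i ! Suc t}"
    "Q i ! (t - 1) \<noteq> Q i ! Suc t"
    by (rule inner_vertex[OF assms(1) False])
  then have "u \<in> {Q i ! (t - 1), Q i ! Suc t}" "v \<in> {Q i ! (t - 1), Q i ! Suc t}"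
    using assms apexes_in_S unfolding nbrs_def by blast+
  moreover have "t - 1 < length (Q i)" using it(4) by linarith
  ultimately have "t - 1 = 0 \<or> Suc t = 0" "t - 1 = length (Q i) - 1 \<or> Suc t = length (Q i) - 1"
    using index_of_u[OF it(1)] index_of_v[OF it(1)] it(4) by blast+
  then show False using long[OF it(1)] it(3,4) by linarith
qed


lemma long_theta_paths_rev: "long_theta_paths A S (\<lambda>i. rev (Q i)) v u"
proof unfold_locales
  fix i :: nat
  assume i: "i < 3"
  show "4 \<le> length (rev (Q i))" using long[OF i] by simp
  have "A (rev (Q i) ! m) (rev (Q i) ! Suc m)" if m: "Suc m < length (Q i)" for m
  proof -
    define k where "k = length (Q i) - Suc (Suc m)"
    have "Suc k < length (Q i)" "rev (Q i) ! m = Q i ! Suc k" "rev (Q i) ! Suc m = Q i ! k"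
      using m unfolding k_def by (auto simp: rev_nth Suc_diff_Suc)
    moreover have "Q i ! k \<in> S" "Q i ! Suc k \<in> S"
      using calculation(1) path_facts(4)[OF i] by (auto intro!: nth_mem)
    ultimately show ?thesis using path_facts(5)[OF i] A_sym by metis
  qed
  moreover have "Q i \<noteq> []" using long[OF i] by (cases "Q i") auto
  ultimately show "is_path_between A (rev (Q i)) v u"
    using paths[OF i] unfolding is_path_between_def by (simp add: hd_rev last_rev)
next
  show "\<And>i j. i < 3 \<Longrightarrow> j < 3 \<Longrightarrow> i \<noteq> j \<Longrightarrow> set (rev (Q i)) \<inter> set (rev (Q j)) = {v, u}"
    using disjoint by auto
  show "S = set (rev (Q 0)) \<union> set (rev (Q 1)) \<union> set (rev (Q 2))"
    using vertices by simp
  show "\<And>x y. x \<in> S \<Longrightarrow> y \<in> S \<Longrightarrow> A x y \<longleftrightarrow> (\<exists>i<3. consec (rev (Q i)) x y)"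
    using edges by (simp add: consec_rev)
qed

lemma second_vertex:
  assumes "i < 3"
  shows "Q i ! 1 \<in> set (Q i)" "Q i ! 1 \<noteq> u" "Q i ! 1 \<noteq> v"
proof -
  have "1 < length (Q i)" using long[OF assms] by simp
  then show "Q i ! 1 \<in> set (Q i)" by simp
  show "Q i ! 1 \<noteq> u" using index_of_u[OF assms \<open>1 < length (Q i)\<close>] by auto
  show "Q i ! 1 \<noteq> v" using index_of_v[OF assms \<open>1 < length (Q i)\<close>] long[OF assms] by auto
qed

lemma first_apex_degree:
  assumes "i < 3" "j < 3" "i \<noteq> j"
  shows "card (nbrs A (set (Q i) \<union> set (Q j)) u) = 2"
proof -
  have "Q k ! 1 \<in> set (Q i) \<union> set (Q j) \<longleftrightarrow> k = i \<or> k = j" if "k < 3" for k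
    using on_other_path[OF that] second_vertex[OF that] assms by auto
  then have "nbrs A (set (Q i) \<union> set (Q j)) u = {Q i ! 1, Q j ! 1}"
    using nbrs_restrict[of "set (Q i) \<union> set (Q j)" S A u] path_facts(4) assms(1,2)
    unfolding first_apex_nbrs by auto
  moreover have "Q i ! 1 \<noteq> Q j ! 1"
  proof
    assume "Q i ! 1 = Q j ! 1"
    then have "Q i ! 1 \<in> set (Q j)" using second_vertex(1)[OF assms(2)] by simp
    then show False using on_other_path[OF assms] second_vertex[OF assms(1)] by auto
  qed
  ultimately show ?thesis by simp
qed

lemma inner_degree:
  assumes "i < 3" "j < 3" "x \<in> set (Q i) \<union> set (Q j)" "x \<notin> {u, v}"
  shows "card (nbrs A (set (Q i) \<union> set (Q j)) x) = 2"
proof -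
  have "x \<in> S" using assms(1-3) path_facts(4) by blast
  obtain k t where kt: "k < 3" "x = Q k ! t" "0 < t" "Suc t < length (Q k)"
    "\<forall>l<3. l \<noteq> k \<longrightarrow> x \<notin> set (Q l)" "nbrs A S x = {Q k ! (t - 1), Q k ! Suc t}"
    "Q k ! (t - 1) \<noteq> Q k ! Suc t"
    by (rule inner_vertex[OF \<open>x \<in> S\<close> assms(4)])
  have "k = i \<or> k = j" using kt(5) assms(1-3) by auto
  moreover have "nbrs A S x \<subseteq> set (Q k)" using kt(4,6) by auto
  ultimately have "nbrs A (set (Q i) \<union> set (Q j)) x = nbrs A S x"
    using nbrs_restrict[of "set (Q i) \<union> set (Q j)" S A x] path_facts(4) assms(1,2) by auto
  then show ?thesis using kt(6,7) by simp
qed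

lemma two_paths_degree:
  assumes "i < 3" "j < 3" "i \<noteq> j" "x \<in> set (Q i) \<union> set (Q j)"
  shows "card (nbrs A (set (Q i) \<union> set (Q j)) x) = 2"
proof -
  consider "x = u" | "x = v" | "x \<notin> {u, v}" by blast
  then show ?thesis
  proof cases
    case 2
    then show ?thesis
      using long_theta_paths.first_apex_degree[OF long_theta_paths_rev assms(1-3)] by simp
  qed (use first_apex_degree inner_degree assms in auto)
qed


lemma path_edge_cut:
  assumes "k < 3" "set (Q k) \<subseteq> H" "H \<subseteq> S" "Suc m < length (Q k)"
  shows "Q k ! m \<in> X \<Longrightarrow> Q k ! Suc m \<notin> X \<Longrightarrow> (Q k ! m, Q k ! Suc m) \<in> cut_edges A H X"
    and "Q k ! m \<notin> X \<Longrightarrow> Q k ! Suc m \<in> X \<Longrightarrow> (Q k ! Suc m, Q k ! m) \<in> cut_edges A H X"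
proof -
  have "Q k ! m \<in> H" "Q k ! Suc m \<in> H" using assms(2,4) by (auto intro!: nth_mem)
  moreover have "A (Q k ! m) (Q k ! Suc m)" using path_facts(5)[OF assms(1,4)] .
  ultimately show "Q k ! m \<in> X \<Longrightarrow> Q k ! Suc m \<notin> X \<Longrightarrow> (Q k ! m, Q k ! Suc m) \<in> cut_edges A H X"
    and "Q k ! m \<notin> X \<Longrightarrow> Q k ! Suc m \<in> X \<Longrightarrow> (Q k ! Suc m, Q k ! m) \<in> cut_edges A H X"
    using A_sym assms(3) unfolding cut_edges_def by auto
qed

lemma path_ends:
  assumes "k < 3"
  shows "Q k ! 0 = u" "Q k ! (length (Q k) - 1) = v" "0 < length (Q k) - 1"
    "length (Q k) - 1 < length (Q k)"
  using path_facts(2,3)[OF assms] long[OF assms] by auto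

lemma separating_cut:
  assumes ij: "i < 3" "j < 3" "i \<noteq> j" and "u \<in> X" "v \<notin> X"
  obtains e f where "e \<in> cut_edges A (set (Q i) \<union> set (Q j)) X"
    "f \<in> cut_edges A (set (Q i) \<union> set (Q j)) X" "e \<noteq> f"
proof -
  have HS: "set (Q i) \<union> set (Q j) \<subseteq> S" using path_facts(4) ij by blast
  obtain m where m: "m < length (Q i) - 1" "Q i ! m \<in> X" "Q i ! Suc m \<notin> X"
    using exists_Suc_change[of 0 "length (Q i) - 1" "\<lambda>m. Q i ! m \<in> X"] path_ends[OF ij(1)]
      assms(4,5) by auto
  obtain n where n: "n < length (Q j) - 1" "Q j ! n \<in> X" "Q j ! Suc n \<notin> X"
    using exists_Suc_change[of 0 "length (Q j) - 1" "\<lambda>m. Q j ! m \<in> X"] path_ends[OF ij(2)]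
      assms(4,5) by auto
  have "(Q i ! m, Q i ! Suc m) \<noteq> (Q j ! n, Q j ! Suc n)"
  proof
    assume eq: "(Q i ! m, Q i ! Suc m) = (Q j ! n, Q j ! Suc n)"
    have "Q i ! m \<in> set (Q i)" "Q i ! Suc m \<in> set (Q i)"
      "Q j ! n \<in> set (Q j)" "Q j ! Suc n \<in> set (Q j)"
      using m(1) n(1) by simp_all
    then have "Q i ! m \<in> {u, v}" "Q i ! Suc m \<in> {u, v}"
      using on_other_path[OF ij] eq by auto
    then have "Q i ! m = u" "Q i ! Suc m = v" using m(2,3) assms(4,5) by auto
    then have "m = 0" "Suc m = length (Q i) - 1"
      using index_of_u[OF ij(1)] index_of_v[OF ij(1)] m(1) by auto
    then show False using long[OF ij(1)] by simp
  qed
  moreover have "(Q i ! m, Q i ! Suc m) \<in> cut_edges A (set (Q i) \<union> set (Q j)) X"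
    by (rule path_edge_cut(1)[OF ij(1) _ HS]) (use m in auto)
  moreover have "(Q j ! n, Q j ! Suc n) \<in> cut_edges A (set (Q i) \<union> set (Q j)) X"
    by (rule path_edge_cut(1)[OF ij(2) _ HS]) (use n in auto)
  ultimately show ?thesis using that by blast
qed

lemma excursion_cut:
  assumes "k < 3" "set (Q k) \<subseteq> H" "H \<subseteq> S" "u \<in> X" "v \<in> X" "w \<in> set (Q k)" "w \<notin> X"
  obtains e f where "e \<in> cut_edges A H X" "f \<in> cut_edges A H X" "e \<noteq> f"
proof -
  obtain t where t: "t < length (Q k)" "Q k ! t = w" using assms(6) by (auto simp: in_set_conv_nth)
  obtain m where m: "m < t" "Q k ! m \<in> X" "Q k ! Suc m \<notin> X"
    using exists_Suc_change[of 0 t "\<lambda>m. Q k ! m \<in> X"] path_ends[OF assms(1)] assms(4,7) t(2)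
    by auto
  have "t \<le> length (Q k) - 1" using t(1) by linarith
  then obtain n where n: "t \<le> n" "n < length (Q k) - 1" "Q k ! n \<notin> X" "Q k ! Suc n \<in> X"
    using exists_Suc_change[of t "length (Q k) - 1" "\<lambda>m. Q k ! m \<notin> X"] path_ends[OF assms(1)]
      assms(5,7) t(2) by auto
  have "Q k ! m \<noteq> Q k ! Suc n"
    using nth_eq_iff_index_eq[OF path_facts(1)[OF assms(1)]] m(1) n(1,2) t(1) by auto
  moreover have "(Q k ! m, Q k ! Suc m) \<in> cut_edges A H X"
    by (rule path_edge_cut(1)[OF assms(1-3)]) (use m t(1) in auto)
  moreover have "(Q k ! Suc n, Q k ! n) \<in> cut_edges A H X"
    by (rule path_edge_cut(2)[OF assms(1-3)]) (use n in auto)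
  ultimately show ?thesis using that by blast
qed

lemma two_paths_cut:
  assumes ij: "i < 3" "j < 3" "i \<noteq> j" and "u \<in> X" "w \<in> set (Q i) \<union> set (Q j)" "w \<notin> X"
  obtains e f where "e \<in> cut_edges A (set (Q i) \<union> set (Q j)) X"
    "f \<in> cut_edges A (set (Q i) \<union> set (Q j)) X" "e \<noteq> f"
proof (cases "v \<in> X")
  case False
  then show ?thesis using separating_cut[OF ij] that \<open>u \<in> X\<close> by blast
next
  case True
  have HS: "set (Q i) \<union> set (Q j) \<subseteq> S" using path_facts(4) ij by blast
  obtain k where "k < 3" "set (Q k) \<subseteq> set (Q i) \<union> set (Q j)" "w \<in> set (Q k)"
    using assms(5) ij by blast
  from excursion_cut[OF this(1,2) HS \<open>u \<in> X\<close> True this(3) \<open>w \<notin> X\<close>] that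
  show ?thesis by blast
qed

lemma two_paths_cycle:
  assumes ij: "i < 3" "j < 3" "i \<noteq> j"
  shows "is_cycle A (set (Q i) \<union> set (Q j))"
proof -
  define H where "H = set (Q i) \<union> set (Q j)"
  have sym: "A x y \<Longrightarrow> A y x" if "x \<in> H" "y \<in> H" for x y
    using A_sym that path_facts(4) ij unfolding H_def by blast
  have "\<exists>e\<in>cut_edges A H X. \<exists>f\<in>cut_edges A H X. e \<noteq> f"
    if cut: "H \<inter> X \<noteq> {}" "H - X \<noteq> {}" for X
  proof (cases "u \<in> X")
    case True
    then show ?thesis using two_paths_cut[OF ij, of X] cut unfolding H_def by blast
  next
    case False
    moreover obtain w where "w \<in> H" "w \<in> X" using cut by blast
    ultimately obtain e f where "e \<in> cut_edges A H (- X)" "f \<in> cut_edges A H (- X)" "e \<noteq> f"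
      using two_paths_cut[OF ij, of "- X" w] unfolding H_def by blast
    then have "prod.swap e \<in> cut_edges A H X" "prod.swap f \<in> cut_edges A H X"
      "prod.swap e \<noteq> prod.swap f"
      using cut_edges_Compl[of H A, OF sym] by (auto simp: inj_eq[OF inj_swap])
    then show ?thesis by blast
  qed
  then show ?thesis
    using two_paths_degree[OF ij] unfolding is_cycle_def H_def by blast
qed

end

section \<open>Holes of a derived long theta\<close>

lemma other_two_of_three:
  assumes "i < (3::nat)"
  obtains j k where "j < 3" "k < 3" "j \<noteq> i" "k \<noteq> i" "j \<noteq> k"
proof -
  have "i = 0 \<or> i = 1 \<or> i = 2" using assms by linarith
  then show ?thesis
  proof (elim disjE)
    assume "i = 0" then show ?thesis using that[of 1 2] by linarith
  next
    assume "i = 1" then show ?thesis using that[of 0 2] by linarith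
  next
    assume "i = 2" then show ?thesis using that[of 0 1] by linarith
  qed
qed

locale derived_theta =
  derived_graph V r p l c S + long_theta_paths "uadj c S" S Q u v
  for V r p l c S Q u v

context derived_theta
begin

lemma two_paths_hole_sources:
  assumes ij: "i < 3" "j < 3" "j \<noteq> i" and "a \<in> set (Q i)" "nbrs adj S a = {s, b}"
    "nbrs adj S a \<subseteq> set (Q i)" "darc c S a s" "darc c S a b" "s \<noteq> b" "anc s b"
  shows "{w. hole_source c S (set (Q i) \<union> set (Q j)) w} \<subseteq> nbrs adj S s"
proof -
  define H where "H = set (Q i) \<union> set (Q j)"
  have cycle: "is_cycle adj H" using two_paths_cycle ij unfolding H_def by metis
  have HS: "H \<subseteq> S" using is_cycle_subset[OF cycle] .
  have nbrs_a: "nbrs adj H a = {s, b}"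
    using nbrs_restrict[OF HS] assms(5,6) unfolding H_def by auto
  have "y \<in> nbrs adj H a" if "y \<in> H" "adj a y" for y using that unfolding nbrs_def by simp
  then have "hole_source c S H a"
    using nbrs_a assms(4,7,8) unfolding hole_source_def H_def by auto
  then have "{w. hole_source c S H w} = nbrs adj H s"
    using pivot_at_lower_nbr(2)[OF cycle _ nbrs_a assms(9,10)] by blast
  then show ?thesis using nbrs_restrict[OF HS] unfolding H_def by blast
qed

text \<open>The pivot s and its neighbour a are inner vertices of one path Q i. In every hole formed
  by Q i and another path, a stays a source with the same neighbours, so s is again the pivot
  there, and both sources lie on Q i.\<close>
lemma sources_confined:
  assumes cycle: "is_cycle adj H" and pivot: "is_pivot r p c S H s"
    and "s \<notin> {u, v}" "a \<in> nbrs adj H s" "a \<notin> {u, v}"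
  obtains i where "i < 3"
    "\<And>j. j < 3 \<Longrightarrow> j \<noteq> i \<Longrightarrow> {w. hole_source c S (set (Q i) \<union> set (Q j)) w} \<subseteq> set (Q i)"
proof -
  have HS: "H \<subseteq> S" using is_cycle_subset[OF cycle] .
  have "s \<in> H" using pivot unfolding is_pivot_def hole_sink_def by blast
  obtain i where s: "i < 3" "s \<in> set (Q i)" "\<forall>j<3. j \<noteq> i \<longrightarrow> s \<notin> set (Q j)"
    "nbrs adj S s \<subseteq> set (Q i)" "card (nbrs adj S s) = 2"
    by (rule inner_vertex_path) (use HS \<open>s \<in> H\<close> assms(3) in auto)
  have s_nbrs: "nbrs adj H s = nbrs adj S s" using is_cycle_nbrs_eq[OF cycle \<open>s \<in> H\<close> HS s(5)] .
  have "a \<in> H" "a \<in> S" "a \<in> set (Q i)" "hole_source c S H a"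
    using assms(4) s_nbrs s(4) HS pivot_sources[OF cycle pivot] unfolding nbrs_def by auto
  obtain i' where a: "i' < 3" "a \<in> set (Q i')" "\<forall>j<3. j \<noteq> i' \<longrightarrow> a \<notin> set (Q j)"
    "nbrs adj S a \<subseteq> set (Q i')" "card (nbrs adj S a) = 2"
    by (rule inner_vertex_path[OF \<open>a \<in> S\<close> assms(5)])
  have "i' = i" using a(3) \<open>a \<in> set (Q i)\<close> s(1) by blast
  have "s \<in> nbrs adj S a" using assms(4) adj_sym HS \<open>s \<in> H\<close> unfolding nbrs_def by auto
  then obtain b where b: "b \<noteq> s" "nbrs adj S a = {s, b}" using card_2_other a(5) by metis
  have "nbrs adj H a = {s, b}" using is_cycle_nbrs_eq[OF cycle \<open>a \<in> H\<close> HS a(5)] b by simp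
  then have "anc s b" "darc c S a s" "darc c S a b"
    using pivot_above_source_nbr[OF cycle pivot assms(4)] b(1)
      source_nbr_darc[OF \<open>hole_source c S H a\<close>] by auto
  then have "{w. hole_source c S (set (Q i) \<union> set (Q j)) w} \<subseteq> set (Q i)"
    if "j < 3" "j \<noteq> i" for j
    using two_paths_hole_sources[OF s(1) that \<open>a \<in> set (Q i)\<close> b(2)] a(4) \<open>i' = i\<close> b(1) s(4)
    by auto
  then show ?thesis using that s(1) by blast
qed

text \<open>Otherwise the hole formed by the two other paths would have its sources, hence the
  neighbours of its pivot, among the apexes u and v.\<close>
lemma sources_not_confined:
  assumes "i < 3"
    "\<And>j. j < 3 \<Longrightarrow> j \<noteq> i \<Longrightarrow> {w. hole_source c S (set (Q i) \<union> set (Q j)) w} \<subseteq> set (Q i)"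
  shows False
proof -
  obtain j k where jk: "j < 3" "k < 3" "j \<noteq> i" "k \<noteq> i" "j \<noteq> k"
    by (rule other_two_of_three[OF assms(1)])
  define H where "H = set (Q j) \<union> set (Q k)"
  have cycle: "is_cycle adj H" using two_paths_cycle jk unfolding H_def by metis
  have HS: "H \<subseteq> S" using is_cycle_subset[OF cycle] .
  have "u \<in> H" using apexes_on_path[OF jk(1)] unfolding H_def by blast
  then obtain t where t: "is_pivot r p c S H t" "{w. hole_source c S H w} = nbrs adj H t"
    using pivot_exists[OF cycle] by blast
  have apex: "w \<in> {u, v}" if w: "hole_source c S H w" for w
  proof (rule ccontr)
    assume "w \<notin> {u, v}"
    have "w \<in> H" using w unfolding hole_source_def by blast
    obtain m where m: "m < 3" "w \<in> set (Q m)" "\<forall>l<3. l \<noteq> m \<longrightarrow> w \<notin> set (Q l)"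
      "nbrs adj S w \<subseteq> set (Q m)" "card (nbrs adj S w) = 2"
      by (rule inner_vertex_path) (use HS \<open>w \<in> H\<close> \<open>w \<notin> {u, v}\<close> in auto)
    have "m = j \<or> m = k" using m(3) \<open>w \<in> H\<close> jk(1,2) unfolding H_def by blast
    then have "m \<noteq> i" "set (Q m) \<subseteq> H" using jk unfolding H_def by auto
    have "set (Q i) \<union> set (Q m) \<subseteq> S" using path_facts(4) assms(1) m(1) by blast
    then have nbrs_w: "nbrs adj (set (Q i) \<union> set (Q m)) w \<subseteq> H"
      unfolding nbrs_restrict[OF \<open>set (Q i) \<union> set (Q m) \<subseteq> S\<close>]
      using m(4) \<open>set (Q m) \<subseteq> H\<close> by auto
    have "hole_source c S (set (Q i) \<union> set (Q m)) w"
      using source_restrict[OF w _ nbrs_w] m(2) by simp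
    then have "w \<in> set (Q i)" using assms(2)[OF m(1) \<open>m \<noteq> i\<close>] by auto
    then show False using on_other_path[OF assms(1) m(1)] \<open>m \<noteq> i\<close> m(2) \<open>w \<notin> {u, v}\<close>
      by auto
  qed
  have "t \<in> H" using t(1) unfolding is_pivot_def hole_sink_def by blast
  then obtain a b where ab: "a \<noteq> b" "nbrs adj H t = {a, b}" using is_cycle_nbrs[OF cycle] by metis
  then have "a \<in> {u, v}" "b \<in> {u, v}" using apex t(2) by auto
  then have "nbrs adj H t = {u, v}" using ab by auto
  then have "adj t u" "adj t v" unfolding nbrs_def by auto
  then show False using no_common_nbr \<open>t \<in> H\<close> HS adj_sym by blast
qed

lemma pivot_is_apex:
  assumes cycle: "is_cycle adj H" and pivot: "is_pivot r p c S H s"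
  shows "s \<in> {u, v}"
proof (rule ccontr)
  assume "s \<notin> {u, v}"
  have "s \<in> H" using pivot unfolding is_pivot_def hole_sink_def by blast
  obtain a b where ab: "a \<noteq> b" "nbrs adj H s = {a, b}"
    using is_cycle_nbrs[OF cycle \<open>s \<in> H\<close>] by metis
  show False
  proof (cases "a \<in> {u, v} \<and> b \<in> {u, v}")
    case True
    then have "adj s u" "adj s v" using ab unfolding nbrs_def by auto
    then show False using no_common_nbr is_cycle_subset[OF cycle] \<open>s \<in> H\<close> adj_sym by blast
  next
    case False
    then obtain a' where "a' \<in> nbrs adj H s" "a' \<notin> {u, v}" using ab by auto
    then show False
      using sources_confined[OF cycle pivot \<open>s \<notin> {u, v}\<close>] sources_not_confined
      by metis
  qed
qed

end

theorem lemma6p4: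
  fixes V S H :: "'a set" and r u v :: 'a
    and p l :: "'a \<Rightarrow> 'a" and c :: "'a \<Rightarrow> 'a set"
  assumes "burling_tree V r p l c"
    and "S \<subseteq> V"
    and "long_theta S (uadj c S) u v"
    and "is_hole S (uadj c S) H"
  shows "is_pivot r p c S H u \<longleftrightarrow> \<not> is_pivot r p c S H v"
proof -
  obtain Q where "long_theta_paths (uadj c S) S Q u v"
    using long_theta_paths_exist[OF assms(3)] .
  then interpret derived_theta V r p l c S Q u v
    using assms(1,2)
    by (simp add: derived_theta_def derived_graph_def derived_graph_axioms_def burling_def)
  have cycle: "is_cycle adj H" using hole_is_cycle[OF assms(4)] .
  have "H \<noteq> {}" using assms(4) unfolding is_hole_def by auto
  then obtain s where pivot: "is_pivot r p c S H s" using pivot_exists[OF cycle] by blast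
  then have "s \<in> {u, v}" using pivot_is_apex[OF cycle] by blast
  then show ?thesis using pivot pivot_unique[OF cycle] apexes_distinct by blast
qed

end
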